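(* Let $k\ge0$ be an unknown Lipschitz constant. The ECP algorithm tuned with any $\varepsilon_1>0$, any growth coefficient $\tau_{n,d}>1$ and any $C>1$ is no-regret over $\mathrm{Lip}(k)$: for every $f\in\mathrm{Lip}(k)$, $\mathcal{R}_{\mathrm{ECP},f}(n)\to0$ in probability as $n\to\infty$.
   Context: $\mathcal{X}\subset\mathbb{R}^d$ is convex, compact with non-empty interior; $\mathrm{Lip}(k)=\{g:\mathcal{X}\to\mathbb{R}:\ |g(x)-g(x')|\le k\|x-x'\|_2\}$. The regret after $n$ evaluations $x_1,\dots,x_n$ is $\mathcal{R}_{\mathrm{ECP},f}(n)=\max_{x\in\mathcal{X}}f(x)-\max_{i=1,\dots,n}f(x_i)$. For evaluated points $x_1,\dots,x_t$ and $\varepsilon>0$, $\mathcal{A}_{\varepsilon,t}=\{x\in\mathcal{X}: \min_{i\le t}(f(x_i)+\varepsilon\|x-x_i\|_2)\ge\max_{j\le t}f(x_j)\}$. ECP algorithm. Inputs: budget $n\in\mathbb{N}^\star$, $\varepsilon_1>0$, a coefficient $\tau_{n,d}>1$ which is a non-decreasing function of $n$ and $d$, a constant $C>1$. Draw $x_1\sim\mathcal{U}(\mathcal{X})$ and evaluate $f(x_1)$; set $t=1$, $h_1=1$, $h_2=0$. While $t<n$: draw a fresh candidate $x_{t+1}\sim\mathcal{U}(\mathcal{X})$ and set $h_{t+1}\leftarrow h_{t+1}+1$; if $h_{t+1}-h_t>C$ (growth condition), set $\varepsilon_t\leftarrow\tau_{n,d}\varepsilon_t$ and $h_{t+1}\leftarrow0$;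 if $x_{t+1}\in\mathcal{A}_{\varepsilon_t,t}$ (acceptance condition), evaluate $f(x_{t+1})$, set $t\leftarrow t+1$, then $h_t\leftarrow h_{t+1}$, $\varepsilon_{t+1}\leftarrow\tau_{n,d}\varepsilon_t$, $h_{t+1}\leftarrow0$. Output $x_{\hat i}$ with $\hat i\in\arg\max_{i\le n}f(x_i)$. *)

theory Defs
  imports "HOL-Probability.Probability"
begin

definition lip_on :: "'a::euclidean_space set \<Rightarrow> real \<Rightarrow> ('a \<Rightarrow> real) \<Rightarrow> bool" where
  "lip_on X k g \<longleftrightarrow> (\<forall>x\<in>X. \<forall>x'\<in>X. \<bar>g x - g x'\<bar> \<le> k * norm (x - x'))"

definition acc_set :: "'a::euclidean_space set \<Rightarrow> ('a \<Rightarrow> real) \<Rightarrow> real \<Rightarrow> 'a list \<Rightarrow> 'a set" where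
  "acc_set X f e xs =
     {x \<in> X. Min ((\<lambda>xi. f xi + e * norm (x - xi)) ` set xs) \<ge> Max (f ` set xs)}"

text \<open>State of ECP: t, current eps_t, h_t, h_{t+1}, evaluated points x_1..x_t.\<close>
record 'a ecp_state =
  cnt :: nat
  eps :: real
  hprev :: nat
  hcur :: nat
  pts :: "'a list"

definition ecp_step :: "'a::euclidean_space set \<Rightarrow> ('a \<Rightarrow> real) \<Rightarrow> nat \<Rightarrow> real \<Rightarrow> real
    \<Rightarrow> 'a \<Rightarrow> 'a ecp_state \<Rightarrow> 'a ecp_state" where
  "ecp_step X f n tau C z s =
    (if n \<le> cnt s then s else
     (let h1 = hcur s + 1;
          grow = (real h1 - real (hprev s) > C);
          e = (if grow then tau * eps s else eps s);
          h2 = (if grow then 0 else h1)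
      in if z \<in> acc_set X f e (pts s)
         then \<lparr>cnt = cnt s + 1, eps = tau * e, hprev = h2, hcur = 0, pts = pts s @ [z]\<rparr>
         else \<lparr>cnt = cnt s, eps = e, hprev = hprev s, hcur = h2, pts = pts s\<rparr>))"

primrec ecp_run :: "'a::euclidean_space set \<Rightarrow> ('a \<Rightarrow> real) \<Rightarrow> nat \<Rightarrow> real \<Rightarrow> real \<Rightarrow> real
    \<Rightarrow> (nat \<Rightarrow> 'a) \<Rightarrow> nat \<Rightarrow> 'a ecp_state" where
  "ecp_run X f n tau e1 C w 0 = \<lparr>cnt = 1, eps = e1, hprev = 1, hcur = 0, pts = [w 0]\<rparr>"
| "ecp_run X f n tau e1 C w (Suc j) = ecp_step X f n tau C (w (Suc j)) (ecp_run X f n tau e1 C w j)"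

definition ecp_points :: "'a::euclidean_space set \<Rightarrow> ('a \<Rightarrow> real) \<Rightarrow> nat \<Rightarrow> real \<Rightarrow> real \<Rightarrow> real
    \<Rightarrow> (nat \<Rightarrow> 'a) \<Rightarrow> 'a list" where
  "ecp_points X f n tau e1 C w =
     pts (ecp_run X f n tau e1 C w (LEAST j. n \<le> cnt (ecp_run X f n tau e1 C w j)))"

definition ecp_regret :: "'a::euclidean_space set \<Rightarrow> ('a \<Rightarrow> real) \<Rightarrow> nat \<Rightarrow> real \<Rightarrow> real \<Rightarrow> real
    \<Rightarrow> (nat \<Rightarrow> 'a) \<Rightarrow> real" where
  "ecp_regret X f n tau e1 C w = Sup (f ` X) - Max (f ` set (ecp_points X f n tau e1 C w))"

end

theory Submission
  imports Defs
begin

(* Every acceptance multiplies eps_t by tau, and the growth condition forces a further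
   multiplication whenever a streak of rejections outlasts the previous one by more than C.
   Hence eps_t exceeds any bound after a number of draws that does not depend on the budget n.
   Once eps_t >= k, Lipschitz continuity puts every point whose value exceeds the current best
   into the acceptance region, so each later candidate ends up with value at most the final
   maximum.  A regret larger than delta thus forces all these candidates to miss the set
   {f > max f - delta}, which has positive probability p under the uniform law; this happens
   with probability (1 - p)^(n - n0), which tends to 0.  The run stops almost surely: a stalled
   run rejects every later candidate while eps_t grows, which confines these candidates to
   shrinking neighbourhoods of finitely many earlier samples, a null event. *)

section \<open>Deterministic properties of ECP runs\<close>

lemma cnt_ecp_run_le: "cnt (ecp_run X f n tau e1 C w j) \<le> Suc j"
  by (induction j) (auto simp: ecp_step_def Let_def)

lemma pts_ecp_run_nonempty: "pts (ecp_run X f n tau e1 C w j) \<noteq> []"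
  by (induction j) (auto simp: ecp_step_def Let_def)

lemma set_pts_ecp_run_subset: "set (pts (ecp_run X f n tau e1 C w j)) \<subseteq> w ` {..j}"
proof (induction j)
  case (Suc j)
  then have "set (pts (ecp_run X f n tau e1 C w j)) \<subseteq> w ` {..Suc j}"
    by (auto intro: le_SucI)
  then show ?case
    by (auto simp: ecp_step_def Let_def)
qed simp

lemma cnt_ecp_run_mono: "i \<le> j \<Longrightarrow> cnt (ecp_run X f n tau e1 C w i) \<le> cnt (ecp_run X f n tau e1 C w j)"
  by (rule lift_Suc_mono_le[where f = "\<lambda>j. cnt (ecp_run X f n tau e1 C w j)"])
    (auto simp: ecp_step_def Let_def)

lemma set_pts_ecp_run_mono:
  "i \<le> j \<Longrightarrow> set (pts (ecp_run X f n tau e1 C w i)) \<subseteq> set (pts (ecp_run X f n tau e1 C w j))"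
  by (rule lift_Suc_mono_le[where f = "\<lambda>j. set (pts (ecp_run X f n tau e1 C w j))"])
    (auto simp: ecp_step_def Let_def)

lemma pts_ecp_step_eq_if_cnt_eq:
  "cnt (ecp_step X f n tau C z s) = cnt s \<Longrightarrow> pts (ecp_step X f n tau C z s) = pts s"
  by (auto simp: ecp_step_def Let_def split: if_splits)

lemma eps_ecp_run_pos: "1 \<le> tau \<Longrightarrow> 0 < e1 \<Longrightarrow> 0 < eps (ecp_run X f n tau e1 C w j)"
  by (induction j) (auto simp: ecp_step_def Let_def)

lemma hcur_ecp_run_le:
  "0 \<le> C \<Longrightarrow> real (hcur (ecp_run X f n tau e1 C w j)) \<le> real (hprev (ecp_run X f n tau e1 C w j)) + C"
  by (induction j) (auto simp: ecp_step_def Let_def)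

lemma ecp_step_cases:
  assumes "cnt s < n" "1 \<le> tau" "0 \<le> eps s"
  obtains (accept) e where "eps s \<le> e" "z \<in> acc_set X f e (pts s)"
      "pts (ecp_step X f n tau C z s) = pts s @ [z]" "cnt (ecp_step X f n tau C z s) = Suc (cnt s)"
    | (reject) e where "eps s \<le> e" "z \<notin> acc_set X f e (pts s)"
      "pts (ecp_step X f n tau C z s) = pts s" "cnt (ecp_step X f n tau C z s) = cnt s"
proof -
  define e where "e = (if real (hcur s + 1) - real (hprev s) > C then tau * eps s else eps s)"
  have "eps s \<le> e"
    using assms(2,3) by (simp add: e_def mult_le_cancel_right1)
  then show ?thesis
    using that assms(1) by (cases "z \<in> acc_set X f e (pts s)") (auto simp: ecp_step_def Let_def e_def)
qed

(* g counts the multiplications of eps.  The growth condition forces one as soon as h_{t+1}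
   exceeds h_t + C, and h_t grows by at most C per multiplication, so at most 2 + (g + 1) C
   candidates are drawn between the g-th and the (g + 1)-st multiplication. *)
lemma ecp_step_growth_invariant:
  assumes C: "0 \<le> C" and t0: "1 \<le> t0" "t0 \<le> tau" and cnt: "cnt s < n"
    and eps_pos: "0 < eps s" and hcur: "real (hcur s) \<le> real (hprev s) + C"
    and g_eps: "e1 * t0 ^ g \<le> eps s" and g_hprev: "real (hprev s) \<le> 1 + real g * C"
    and g_steps: "real j \<le> (\<Sum>i<g. 2 + real (Suc i) * C) + real (hcur s)"
  obtains g' where "e1 * t0 ^ g' \<le> eps (ecp_step X f n tau C z s)"
    "real (hprev (ecp_step X f n tau C z s)) \<le> 1 + real g' * C"
    "real (Suc j) \<le> (\<Sum>i<g'. 2 + real (Suc i) * C) + real (hcur (ecp_step X f n tau C z s))"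
proof -
  have "e1 * t0 ^ Suc g = (e1 * t0 ^ g) * t0"
    by (simp add: mult.assoc mult.commute)
  also have "\<dots> \<le> eps s * tau"
    using g_eps t0 eps_pos by (intro mult_mono) auto
  finally have eps1: "e1 * t0 ^ Suc g \<le> tau * eps s"
    by (simp add: mult.commute)
  have "tau * eps s \<le> tau * (tau * eps s)"
    using t0 eps_pos by simp
  with eps1 have eps2: "e1 * t0 ^ Suc g \<le> tau * (tau * eps s)"
    by linarith
  have steps: "real (Suc j) \<le> (\<Sum>i<Suc g. 2 + real (Suc i) * C)"
    using g_steps hcur g_hprev by (simp add: algebra_simps)
  have hprev: "real (hprev s) \<le> 1 + real (Suc g) * C"
    using g_hprev C by (simp add: algebra_simps)
  show ?thesis
  proof (cases "real (hcur s + 1) - real (hprev s) > C")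
    case True
    then show ?thesis
      using that[of "Suc g"] cnt eps1 eps2 steps hprev C unfolding ecp_step_def Let_def by auto
  next
    case False
    show ?thesis
    proof (cases "z \<in> acc_set X f (eps s) (pts s)")
      case True
      have "real (hcur s + 1) \<le> 1 + real (Suc g) * C"
        using False g_hprev by (simp add: algebra_simps)
      then show ?thesis
        using that[of "Suc g"] True False cnt eps1 steps unfolding ecp_step_def Let_def by auto
    next
      case rejected: False
      then show ?thesis
        using that[of g] False cnt g_eps g_hprev g_steps unfolding ecp_step_def Let_def by auto
    qed
  qed
qed

lemma ecp_run_growth_invariant:
  assumes C: "0 \<le> C" and t0: "1 \<le> t0" "t0 \<le> tau" and e1: "0 < e1"
  shows "cnt (ecp_run X f n tau e1 C w j) < n \<Longrightarrow>
    \<exists>g. e1 * t0 ^ g \<le> eps (ecp_run X f n tau e1 C w j)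
      \<and> real (hprev (ecp_run X f n tau e1 C w j)) \<le> 1 + real g * C
      \<and> real j \<le> (\<Sum>i<g. 2 + real (Suc i) * C) + real (hcur (ecp_run X f n tau e1 C w j))"
proof (induction j)
  case 0
  show ?case
    using e1 by (intro exI[of _ 0]) simp
next
  case (Suc j)
  let ?s = "ecp_run X f n tau e1 C w j"
  have cnt: "cnt ?s < n"
    using Suc.prems cnt_ecp_run_mono[of j "Suc j" X f n tau e1 C w] by simp
  then obtain g where "e1 * t0 ^ g \<le> eps ?s" "real (hprev ?s) \<le> 1 + real g * C"
    "real j \<le> (\<Sum>i<g. 2 + real (Suc i) * C) + real (hcur ?s)"
    using Suc.IH by blast
  moreover have "0 < eps ?s"
    using t0 e1 by (intro eps_ecp_run_pos) auto
  ultimately obtain g' where "e1 * t0 ^ g' \<le> eps (ecp_step X f n tau C (w (Suc j)) ?s)"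
    "real (hprev (ecp_step X f n tau C (w (Suc j)) ?s)) \<le> 1 + real g' * C"
    "real (Suc j) \<le> (\<Sum>i<g'. 2 + real (Suc i) * C) + real (hcur (ecp_step X f n tau C (w (Suc j)) ?s))"
    using ecp_step_growth_invariant[OF C t0 cnt _ hcur_ecp_run_le[OF C]] by blast
  then show ?case
    by auto
qed

lemma eps_ecp_run_unbounded:
  assumes C: "0 \<le> C" and t0: "1 < t0" and e1: "0 < e1"
  shows "\<exists>N. \<forall>n tau w j. t0 \<le> tau \<longrightarrow> N \<le> j \<longrightarrow> cnt (ecp_run X f n tau e1 C w j) < n
    \<longrightarrow> R \<le> eps (ecp_run X f n tau e1 C w j)"
proof -
  define S where "S g = (\<Sum>i<g. 2 + real (Suc i) * C)" for g
  have S_mono: "S a \<le> S b" if "a \<le> b" for a b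
    unfolding S_def using that C by (intro sum_mono2) auto
  obtain M where "R / e1 < t0 ^ M"
    using real_arch_pow[OF t0] by blast
  then have R: "R \<le> e1 * t0 ^ M"
    using e1 by (simp add: field_simps)
  have "R \<le> eps (ecp_run X f n tau e1 C w j)"
    if tau: "t0 \<le> tau" and j: "nat \<lfloor>S M\<rfloor> + 1 \<le> j" and cnt: "cnt (ecp_run X f n tau e1 C w j) < n"
    for n tau w j
  proof -
    let ?s = "ecp_run X f n tau e1 C w j"
    obtain g where g_eps: "e1 * t0 ^ g \<le> eps ?s" and g_hprev: "real (hprev ?s) \<le> 1 + real g * C"
      and g_steps: "real j \<le> S g + real (hcur ?s)"
      using ecp_run_growth_invariant[OF C _ tau e1 cnt] t0 by (auto simp: S_def)
    have "real j \<le> S (Suc g)"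
      using g_steps g_hprev hcur_ecp_run_le[OF C, of X f n tau e1 w j]
      by (simp add: S_def algebra_simps)
    moreover have "S M < real j"
      using j by linarith
    ultimately have "M \<le> g"
      using S_mono[of "Suc g" M] by (cases "Suc g \<le> M") auto
    then have "e1 * t0 ^ M \<le> e1 * t0 ^ g"
      using t0 e1 by (simp add: power_increasing)
    then show ?thesis
      using R g_eps by linarith
  qed
  then show ?thesis
    by blast
qed

lemma notin_acc_set_witness:
  assumes "x \<in> X" "x \<notin> acc_set X f e xs" "xs \<noteq> []"
  obtains xi where "xi \<in> set xs" "f xi + e * norm (x - xi) < Max (f ` set xs)"
proof -
  let ?g = "\<lambda>xi. f xi + e * norm (x - xi)"
  have "Min (?g ` set xs) < Max (f ` set xs)"
    using assms(1,2) by (auto simp: acc_set_def not_le)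
  moreover have "Min (?g ` set xs) \<in> ?g ` set xs"
    using assms(3) by (intro Min_in) auto
  ultimately show ?thesis
    using that by auto
qed

lemma lip_on_notin_acc_set_less_Max:
  assumes lip: "lip_on X k f" and "k \<le> e" and xs: "set xs \<subseteq> X" "xs \<noteq> []"
    and x: "x \<in> X" "x \<notin> acc_set X f e xs"
  shows "f x < Max (f ` set xs)"
proof -
  obtain xi where xi: "xi \<in> set xs" "f xi + e * norm (x - xi) < Max (f ` set xs)"
    using notin_acc_set_witness[OF x xs(2)] .
  have "f x - f xi \<le> k * norm (x - xi)"
    using lip xs(1) x(1) xi(1) unfolding lip_on_def by fastforce
  also have "\<dots> \<le> e * norm (x - xi)"
    using \<open>k \<le> e\<close> by (intro mult_right_mono) auto
  finally show ?thesis
    using xi(2) by linarith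
qed

lemma bounded_notin_acc_set_close:
  assumes K: "\<forall>x\<in>X. \<bar>f x\<bar> \<le> K" and xs: "set xs \<subseteq> X" "xs \<noteq> []"
    and x: "x \<in> X" "x \<notin> acc_set X f e xs"
  obtains xi where "xi \<in> set xs" "e * dist x xi < 2 * K"
proof -
  obtain xi where xi: "xi \<in> set xs" "f xi + e * norm (x - xi) < Max (f ` set xs)"
    using notin_acc_set_witness[OF x xs(2)] .
  have "Max (f ` set xs) \<in> f ` set xs"
    using xs(2) by (intro Max_in) auto
  then obtain xm where "xm \<in> set xs" "Max (f ` set xs) = f xm"
    by blast
  moreover have "\<bar>f xi\<bar> \<le> K" "\<bar>f xm\<bar> \<le> K"
    using K xs(1) xi(1) \<open>xm \<in> set xs\<close> by auto
  ultimately show ?thesis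
    using that xi by (simp add: dist_norm abs_le_iff)
qed

lemma candidate_le_Max_pts_ecp_run:
  assumes lip: "lip_on X k f" and w: "range w \<subseteq> X" and tau: "1 \<le> tau" and e1: "0 < e1"
    and cnt: "cnt (ecp_run X f n tau e1 C w j) < n" and k: "k \<le> eps (ecp_run X f n tau e1 C w j)"
  shows "f (w (Suc j)) \<le> Max (f ` set (pts (ecp_run X f n tau e1 C w (Suc j))))"
proof -
  let ?s = "ecp_run X f n tau e1 C w j"
  have run: "ecp_run X f n tau e1 C w (Suc j) = ecp_step X f n tau C (w (Suc j)) ?s"
    by simp
  have eps: "0 \<le> eps ?s"
    using eps_ecp_run_pos[OF tau e1] less_imp_le by blast
  show ?thesis
  proof (cases rule: ecp_step_cases[OF cnt tau eps, where z = "w (Suc j)" and X = X and f = f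
        and C = C, case_names accept reject])
    case (accept e)
    then show ?thesis
      by (simp add: run)
  next
    case (reject e)
    have "set (pts ?s) \<subseteq> X"
      using set_pts_ecp_run_subset w by blast
    then have "f (w (Suc j)) < Max (f ` set (pts ?s))"
      using lip_on_notin_acc_set_less_Max[OF lip _ _ pts_ecp_run_nonempty _ reject(2)] k reject(1) w
      by auto
    then show ?thesis
      using reject(3) by (simp add: run)
  qed
qed

lemma Max_ecp_points_le_Sup:
  assumes w: "range w \<subseteq> X" and bdd: "bdd_above (f ` X)"
  shows "Max (f ` set (ecp_points X f n tau e1 C w)) \<le> Sup (f ` X)"
proof -
  let ?P = "set (ecp_points X f n tau e1 C w)"
  obtain J where "?P = set (pts (ecp_run X f n tau e1 C w J))"
    by (simp add: ecp_points_def)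
  moreover have "w ` {..J} \<subseteq> X"
    using w by auto
  ultimately have "?P \<subseteq> X" "?P \<noteq> {}"
    using set_pts_ecp_run_subset[of X f n tau e1 C w J] pts_ecp_run_nonempty[of X f n tau e1 C w J]
    by auto
  moreover have "Max (f ` ?P) \<in> f ` ?P"
    using \<open>?P \<noteq> {}\<close> by (intro Max_in) auto
  ultimately show ?thesis
    using bdd by (auto intro: cSup_upper)
qed

lemma candidate_le_Max_ecp_points:
  assumes lip: "lip_on X k f" and w: "range w \<subseteq> X" and tau: "1 \<le> tau" and e1: "0 < e1"
    and stop: "n \<le> cnt (ecp_run X f n tau e1 C w J)" and j: "Suc j < n"
    and k: "k \<le> eps (ecp_run X f n tau e1 C w j)"
  shows "f (w (Suc j)) \<le> Max (f ` set (ecp_points X f n tau e1 C w))"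
proof -
  define L where "L = (LEAST J. n \<le> cnt (ecp_run X f n tau e1 C w J))"
  have L: "n \<le> cnt (ecp_run X f n tau e1 C w L)"
    unfolding L_def using stop by (rule LeastI)
  have cnt: "cnt (ecp_run X f n tau e1 C w j) < n"
    using cnt_ecp_run_le[of X f n tau e1 C w j] j by linarith
  have "Suc j \<le> L"
  proof (rule ccontr)
    assume "\<not> Suc j \<le> L"
    then show False
      using L cnt cnt_ecp_run_mono[of L j X f n tau e1 C w] by simp
  qed
  then have "set (pts (ecp_run X f n tau e1 C w (Suc j))) \<subseteq> set (ecp_points X f n tau e1 C w)"
    unfolding ecp_points_def L_def[symmetric] by (rule set_pts_ecp_run_mono)
  moreover have "set (pts (ecp_run X f n tau e1 C w (Suc j))) \<noteq> {}"
    using pts_ecp_run_nonempty by blast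
  ultimately have "Max (f ` set (pts (ecp_run X f n tau e1 C w (Suc j)))) \<le> Max (f ` set (ecp_points X f n tau e1 C w))"
    by (intro Max_mono image_mono) auto
  then show ?thesis
    using candidate_le_Max_pts_ecp_run[OF lip w tau e1 cnt k] by linarith
qed

lemma stalled_ecp_run_eventually_const:
  assumes stall: "\<forall>j. cnt (ecp_run X f n tau e1 C w j) < n"
  obtains J where "\<And>j. J \<le> j \<Longrightarrow> cnt (ecp_run X f n tau e1 C w j) = cnt (ecp_run X f n tau e1 C w J)"
    "\<And>j. J \<le> j \<Longrightarrow> pts (ecp_run X f n tau e1 C w j) = pts (ecp_run X f n tau e1 C w J)"
proof -
  define c where "c j = cnt (ecp_run X f n tau e1 C w j)" for j
  have "range c \<subseteq> {..<n}"
    using stall by (auto simp: c_def)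
  then have "finite (range c)"
    using finite_subset by blast
  then obtain J where "c J = Max (range c)"
    using Max_in by (metis UNIV_not_empty image_is_empty rangeE)
  then have J: "c j \<le> c J" for j
    using \<open>finite (range c)\<close> by simp
  have c_const: "c j = c J" if "J \<le> j" for j
    using J[of j] cnt_ecp_run_mono[OF that, of X f n tau e1 C w] by (simp add: c_def)
  have pts_const: "pts (ecp_run X f n tau e1 C w j) = pts (ecp_run X f n tau e1 C w J)" if "J \<le> j" for j
    using that
  proof (induction j rule: dec_induct)
    case (step j)
    then have "c (Suc j) = c j"
      using c_const[of j] c_const[of "Suc j"] by simp
    then show ?case
      using step.IH by (simp add: c_def pts_ecp_step_eq_if_cnt_eq)
  qed simp
  show ?thesis
    by (rule that) (use c_const pts_const in \<open>auto simp: c_def\<close>)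
qed

lemma stalled_ecp_run_candidates_close:
  assumes stall: "\<forall>j. cnt (ecp_run X f n tau e1 C w j) < n" and K: "\<forall>x\<in>X. \<bar>f x\<bar> \<le> K"
    and w: "range w \<subseteq> X" and tau: "1 \<le> tau" and e1: "0 < e1"
  obtains J where "\<And>j. J \<le> j \<Longrightarrow> \<exists>i\<le>J. eps (ecp_run X f n tau e1 C w j) * dist (w (Suc j)) (w i) < 2 * K"
proof -
  obtain J where cnt_const: "\<And>j. J \<le> j \<Longrightarrow> cnt (ecp_run X f n tau e1 C w j) = cnt (ecp_run X f n tau e1 C w J)"
    and pts_const: "\<And>j. J \<le> j \<Longrightarrow> pts (ecp_run X f n tau e1 C w j) = pts (ecp_run X f n tau e1 C w J)"
    using stalled_ecp_run_eventually_const[OF stall] by blast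
  show ?thesis
  proof (rule that)
    fix j assume j: "J \<le> j"
    let ?s = "ecp_run X f n tau e1 C w j"
    have run: "ecp_run X f n tau e1 C w (Suc j) = ecp_step X f n tau C (w (Suc j)) ?s"
      by simp
    have cnt: "cnt (ecp_run X f n tau e1 C w (Suc j)) = cnt ?s"
      using cnt_const[of j] cnt_const[of "Suc j"] j by simp
    have eps: "0 \<le> eps ?s"
      using eps_ecp_run_pos[OF tau e1] less_imp_le by blast
    obtain e where e: "eps ?s \<le> e" "w (Suc j) \<notin> acc_set X f e (pts ?s)"
    proof (cases rule: ecp_step_cases[OF stall[rule_format] tau eps, where z = "w (Suc j)" and X = X
          and f = f and C = C, case_names accept reject])
      case (accept e)
      then show ?thesis
        using cnt by (simp add: run)
    next
      case (reject e)
      then show ?thesis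
        using that by blast
    qed
    have "set (pts ?s) \<subseteq> X"
      using set_pts_ecp_run_subset[of X f n tau e1 C w j] w by auto
    then obtain xi where xi: "xi \<in> set (pts ?s)" "e * dist (w (Suc j)) xi < 2 * K"
      using bounded_notin_acc_set_close[OF K _ pts_ecp_run_nonempty _ e(2)] w by blast
    obtain i where "i \<le> J" "xi = w i"
      using xi(1) pts_const[OF j] set_pts_ecp_run_subset[of X f n tau e1 C w J] by auto
    moreover have "eps ?s * dist (w (Suc j)) xi \<le> e * dist (w (Suc j)) xi"
      using e(1) by (intro mult_right_mono) auto
    ultimately show "\<exists>i\<le>J. eps ?s * dist (w (Suc j)) (w i) < 2 * K"
      using xi(2) by force
  qed
qed

section \<open>Measurability of the regret\<close>

(* The state of a run with eps_t recorded by its exponent g in e1 * tau ^ g and the evaluated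
   points by their indices in the sample sequence; unlike ecp_state this ranges over a
   countable type. *)
type_synonym ecp_skeleton = "nat \<times> nat \<times> nat \<times> nat \<times> nat list"

definition ecp_skel_step :: "'a::euclidean_space set \<Rightarrow> ('a \<Rightarrow> real) \<Rightarrow> nat \<Rightarrow> real \<Rightarrow> real \<Rightarrow> real
    \<Rightarrow> nat \<Rightarrow> ecp_skeleton \<Rightarrow> (nat \<Rightarrow> 'a) \<Rightarrow> ecp_skeleton" where
  "ecp_skel_step X f n tau e1 C j d w = (case d of (c, g, hp, hc, idx) \<Rightarrow>
     (if n \<le> c then d else
      (let h1 = hc + 1;
          grow = (real h1 - real hp > C);
          g' = (if grow then Suc g else g);
          h2 = (if grow then 0 else h1)
       in if w j \<in> acc_set X f (e1 * tau ^ g') (map w idx)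
          then (Suc c, Suc g', h2, 0, idx @ [j])
          else (c, g', hp, h2, idx))))"

primrec ecp_skel_run :: "'a::euclidean_space set \<Rightarrow> ('a \<Rightarrow> real) \<Rightarrow> nat \<Rightarrow> real \<Rightarrow> real \<Rightarrow> real
    \<Rightarrow> nat \<Rightarrow> (nat \<Rightarrow> 'a) \<Rightarrow> ecp_skeleton" where
  "ecp_skel_run X f n tau e1 C 0 w = (1, 0, 1, 0, [0])"
| "ecp_skel_run X f n tau e1 C (Suc j) w =
     ecp_skel_step X f n tau e1 C (Suc j) (ecp_skel_run X f n tau e1 C j w) w"

definition ecp_state_of_skel :: "real \<Rightarrow> real \<Rightarrow> (nat \<Rightarrow> 'a) \<Rightarrow> ecp_skeleton \<Rightarrow> 'a ecp_state" where
  "ecp_state_of_skel e1 tau w d = (case d of (c, g, hp, hc, idx) \<Rightarrow>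
     \<lparr>cnt = c, eps = e1 * tau ^ g, hprev = hp, hcur = hc, pts = map w idx\<rparr>)"

lemma ecp_run_eq_skel_run:
  "ecp_run X f n tau e1 C w j = ecp_state_of_skel e1 tau w (ecp_skel_run X f n tau e1 C j w)"
proof (induction j)
  case (Suc j)
  obtain c g hp hc idx where d: "ecp_skel_run X f n tau e1 C j w = (c, g, hp, hc, idx)"
    by (cases "ecp_skel_run X f n tau e1 C j w") auto
  have pow: "tau * (e1 * tau ^ g) = e1 * tau ^ Suc g" "tau * (e1 * tau ^ Suc g) = e1 * tau ^ Suc (Suc g)"
    by simp_all
  show ?case
    using Suc by (simp add: d ecp_state_of_skel_def ecp_skel_step_def ecp_step_def Let_def pow del: power_Suc)
qed (simp add: ecp_state_of_skel_def)

locale sampling =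
  fixes N :: "'a::euclidean_space measure" and X :: "'a set"
  assumes space_N: "space N = X" and sets_N: "sets N = sets (restrict_space borel X)"
begin

abbreviation samples :: "(nat \<Rightarrow> 'a) measure" where
  "samples \<equiv> PiM UNIV (\<lambda>_. N)"

lemma space_samples_in: "w \<in> space samples \<Longrightarrow> w i \<in> X"
  by (auto simp: space_PiM space_N)

lemma id_borel_measurable_N: "(\<lambda>x. x) \<in> borel_measurable N"
proof -
  have "(\<lambda>x. x) \<in> measurable (restrict_space borel X) borel"
    by (rule measurable_restrict_space1) simp
  then show ?thesis
    by (subst measurable_cong_sets[OF sets_N refl])
qed

lemma coord_borel_measurable[measurable]: "(\<lambda>w. w i) \<in> borel_measurable samples"
  using measurable_compose[OF _ id_borel_measurable_N, of "\<lambda>w. w i"] by simp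

lemma fst_borel_measurable_N[measurable]: "fst \<in> borel_measurable (N \<Otimes>\<^sub>M N)"
  by (rule measurable_compose[OF measurable_fst id_borel_measurable_N])

lemma snd_borel_measurable_N[measurable]: "snd \<in> borel_measurable (N \<Otimes>\<^sub>M N)"
  by (rule measurable_compose[OF measurable_snd id_borel_measurable_N])

lemma f_coord_borel_measurable:
  "f \<in> borel_measurable N \<Longrightarrow> (\<lambda>w. f (w i)) \<in> borel_measurable samples"
  by (rule measurable_compose[OF measurable_component_singleton]) simp_all

lemma acc_set_samples_sets:
  assumes "f \<in> borel_measurable N"
  shows "{w \<in> space samples. w j \<in> acc_set X f e (map w idx)} \<in> sets samples"
proof -
  note [measurable] = f_coord_borel_measurable[OF assms]
  have "{w \<in> space samples. w j \<in> acc_set X f e (map w idx)} =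
    {w \<in> space samples. Max ((\<lambda>i. f (w i)) ` set idx) \<le> Min ((\<lambda>i. f (w i) + e * norm (w j - w i)) ` set idx)}"
    by (auto simp: acc_set_def image_image space_samples_in)
  also have "\<dots> \<in> sets samples"
    by measurable
  finally show ?thesis .
qed

lemma ecp_skel_run_measurable:
  assumes "f \<in> borel_measurable N"
  shows "(\<lambda>w. ecp_skel_run X f n tau e1 C j w) \<in> measurable samples (count_space UNIV)"
proof -
  have step: "(\<lambda>w. ecp_skel_step X f n tau e1 C j d w) \<in> measurable samples (count_space UNIV)" for j d
    by (cases d) (auto simp: ecp_skel_step_def Let_def intro!: measurable_If acc_set_samples_sets[OF assms])
  show ?thesis
    by (induction j) (auto intro: measurable_compose_countable'[OF step])
qed

lemma ecp_regret_borel_measurable: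
  assumes f: "f \<in> borel_measurable N"
  shows "ecp_regret X f n tau e1 C \<in> borel_measurable samples"
proof -
  note [measurable] = f_coord_borel_measurable[OF f]
  note run = ecp_skel_run_measurable[OF f]
  define L where "L w = (LEAST j. n \<le> fst (ecp_skel_run X f n tau e1 C j w))" for w
  define idx where "idx j w = snd (snd (snd (snd (ecp_skel_run X f n tau e1 C j w))))" for j w
  have "cnt (ecp_run X f n tau e1 C w j) = fst (ecp_skel_run X f n tau e1 C j w)"
    and "pts (ecp_run X f n tau e1 C w j) = map w (idx j w)" for w j
    by (simp_all add: ecp_run_eq_skel_run ecp_state_of_skel_def idx_def split: prod.splits)
  then have regret: "ecp_regret X f n tau e1 C w = Sup (f ` X) - Max ((\<lambda>i. f (w i)) ` set (idx (L w) w))" for w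
    by (simp add: ecp_regret_def ecp_points_def L_def image_image)
  have L: "L \<in> measurable samples (count_space UNIV)"
    unfolding L_def by (rule measurable_Least) (rule measurable_compose[OF run], simp)
  have regret_of: "(\<lambda>w. Sup (f ` X) - Max ((\<lambda>i. f (w i)) ` set is)) \<in> borel_measurable samples" for "is"
    by measurable
  have idx: "(\<lambda>w. idx j w) \<in> measurable samples (count_space UNIV)" for j
    unfolding idx_def by (rule measurable_compose[OF run]) simp
  have "(\<lambda>w. Sup (f ` X) - Max ((\<lambda>i. f (w i)) ` set (idx j w))) \<in> borel_measurable samples" for j
    using measurable_compose_countable'[OF regret_of idx] by simp
  from measurable_compose_countable'[OF this L] show ?thesis
    unfolding regret by simp
qed

end

section \<open>Independent samples\<close>

locale iid_sampling = sampling + prob_space N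
begin

lemma prob_space_samples: "prob_space samples"
  by (rule prob_space_PiM) (rule prob_space_axioms)

lemma emeasure_samples_prod_emb:
  assumes "finite I" "\<And>i. i \<in> I \<Longrightarrow> A i \<in> sets N"
  shows "emeasure samples (prod_emb UNIV (\<lambda>_. N) I (Pi\<^sub>E I A)) = (\<Prod>i\<in>I. emeasure N (A i))"
  by (rule emeasure_PiM_emb) (auto simp: assms prob_space_axioms)

lemma distr_samples_pair:
  assumes ij: "i \<noteq> j"
  shows "distr samples (N \<Otimes>\<^sub>M N) (\<lambda>w. (w i, w j)) = N \<Otimes>\<^sub>M N"
proof (rule pair_measure_eqI[symmetric])
  show "sigma_finite_measure N" "sigma_finite_measure N"
    by (simp_all add: prob_space_imp_sigma_finite prob_space_axioms)
  show "sets (N \<Otimes>\<^sub>M N) = sets (distr samples (N \<Otimes>\<^sub>M N) (\<lambda>w. (w i, w j)))"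
    by simp
  fix A B assume A: "A \<in> sets N" and B: "B \<in> sets N"
  define F where "F k = (if k = i then A else B)" for k
  have "(\<lambda>w. (w i, w j)) -` (A \<times> B) \<inter> space samples = prod_emb UNIV (\<lambda>_. N) {i, j} (Pi\<^sub>E {i, j} F)"
    using ij by (auto simp: prod_emb_def F_def PiE_iff space_PiM)
  then have "emeasure (distr samples (N \<Otimes>\<^sub>M N) (\<lambda>w. (w i, w j))) (A \<times> B)
      = emeasure samples (prod_emb UNIV (\<lambda>_. N) {i, j} (Pi\<^sub>E {i, j} F))"
    using A B by (subst emeasure_distr) auto
  also have "\<dots> = emeasure N A * emeasure N B"
    using ij A B by (subst emeasure_samples_prod_emb) (auto simp: F_def)
  finally show "emeasure N A * emeasure N B = emeasure (distr samples (N \<Otimes>\<^sub>M N) (\<lambda>w. (w i, w j))) (A \<times> B)"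
    by simp
qed

lemma measure_pair_close_le:
  assumes small: "\<And>x. x \<in> X \<Longrightarrow> measure N {y \<in> X. dist y x < r} \<le> e"
  shows "measure (N \<Otimes>\<^sub>M N) {p \<in> space (N \<Otimes>\<^sub>M N). dist (snd p) (fst p) < r} \<le> e"
    (is "measure _ ?D \<le> _")
proof -
  interpret NN: prob_space "N \<Otimes>\<^sub>M N"
    by (intro prob_space_pair prob_space_axioms)
  obtain x where "x \<in> X"
    using not_empty space_N by blast
  then have "0 \<le> e"
    using small[of x] measure_nonneg[of N] by (meson order_trans)
  have D: "?D \<in> sets (N \<Otimes>\<^sub>M N)"
    by measurable
  have "emeasure (N \<Otimes>\<^sub>M N) ?D = (\<integral>\<^sup>+x. emeasure N (Pair x -` ?D) \<partial>N)"
    by (rule emeasure_pair_measure_alt[OF D])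
  also have "\<dots> \<le> (\<integral>\<^sup>+x. ennreal e \<partial>N)"
  proof (rule nn_integral_mono)
    fix x assume x: "x \<in> space N"
    then have "Pair x -` ?D = {y \<in> X. dist y x < r}"
      by (auto simp: space_pair_measure space_N)
    then show "emeasure N (Pair x -` ?D) \<le> ennreal e"
      using small[of x] x space_N emeasure_eq_measure by (simp add: ennreal_leI)
  qed
  also have "\<dots> = ennreal e"
    by (simp add: emeasure_space_1)
  finally show ?thesis
    using \<open>0 \<le> e\<close> NN.emeasure_eq_measure[of ?D] by (simp add: ennreal_le_iff)
qed

lemma measure_samples_close_le:
  assumes ij: "i \<noteq> j" and small: "\<And>x. x \<in> X \<Longrightarrow> measure N {y \<in> X. dist y x < r} \<le> e"
  shows "measure samples {w \<in> space samples. dist (w j) (w i) < r} \<le> e"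
proof -
  define D where "D = {p \<in> space (N \<Otimes>\<^sub>M N). dist (snd p) (fst p) < r}"
  have D: "D \<in> sets (N \<Otimes>\<^sub>M N)"
    unfolding D_def by measurable
  have pair: "(\<lambda>w. (w i, w j)) \<in> measurable samples (N \<Otimes>\<^sub>M N)"
    by measurable
  have "{w \<in> space samples. dist (w j) (w i) < r} = (\<lambda>w. (w i, w j)) -` D \<inter> space samples"
    by (auto simp: D_def space_pair_measure space_PiM)
  then have "measure samples {w \<in> space samples. dist (w j) (w i) < r} = measure (N \<Otimes>\<^sub>M N) D"
    by (simp add: measure_distr[OF pair D, symmetric] distr_samples_pair[OF ij])
  also have "\<dots> \<le> e"
    unfolding D_def by (rule measure_pair_close_le[OF small])
  finally show ?thesis .
qed

lemma null_sets_samples_close: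
  assumes small: "\<And>e. 0 < e \<Longrightarrow> \<exists>r>0. \<forall>x\<in>X. measure N {y \<in> X. dist y x < r} \<le> e"
    and r: "r \<longlonglongrightarrow> 0" and j: "\<And>m. J < j m"
  shows "{w \<in> space samples. \<forall>m. \<exists>i\<le>J. dist (w (j m)) (w i) < r m} \<in> null_sets samples"
    (is "?Z \<in> _")
proof -
  interpret S: prob_space samples
    by (rule prob_space_samples)
  have Z: "?Z \<in> sets samples"
    by measurable
  have "measure samples ?Z \<le> e" if "0 < e" for e
  proof -
    define e' where "e' = e / (real J + 1)"
    obtain \<rho> where "0 < \<rho>" and \<rho>: "\<forall>x\<in>X. measure N {y \<in> X. dist y x < \<rho>} \<le> e'"
      using small[of e'] \<open>0 < e\<close> by (auto simp: e'_def)
    obtain m where "r m < \<rho>"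
      using order_tendstoD(2)[OF r \<open>0 < \<rho>\<close>] by (auto simp: eventually_sequentially)
    let ?C = "\<lambda>i. {w \<in> space samples. dist (w (j m)) (w i) < \<rho>}"
    have "?Z \<subseteq> (\<Union>i\<in>{..J}. ?C i)"
    proof
      fix w assume "w \<in> ?Z"
      then obtain i where "i \<le> J" "dist (w (j m)) (w i) < r m" "w \<in> space samples"
        by blast
      then show "w \<in> (\<Union>i\<in>{..J}. ?C i)"
        using \<open>r m < \<rho>\<close> by (intro UN_I[of i]) auto
    qed
    then have "measure samples ?Z \<le> measure samples (\<Union>i\<in>{..J}. ?C i)"
      by (intro S.finite_measure_mono) measurable
    also have "\<dots> \<le> (\<Sum>i\<in>{..J}. measure samples (?C i))"
      by (rule measure_UNION_le) (auto, measurable)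
    also have "\<dots> \<le> (\<Sum>i\<in>{..J}. e')"
      using j[of m] \<rho> by (intro sum_mono measure_samples_close_le) auto
    also have "\<dots> = e"
      by (simp add: e'_def field_simps)
    finally show ?thesis .
  qed
  then have "measure samples ?Z = 0"
    by (meson dense_le linorder_not_le measure_nonneg order_antisym)
  then show ?thesis
    using Z by (auto simp: S.emeasure_eq_measure)
qed

lemma measure_samples_all_in:
  assumes A: "A \<in> sets N" and I: "finite I"
  shows "measure samples {w \<in> space samples. \<forall>i\<in>I. w i \<in> A} = measure N A ^ card I"
proof -
  have "{w \<in> space samples. \<forall>i\<in>I. w i \<in> A} = prod_emb UNIV (\<lambda>_. N) I (Pi\<^sub>E I (\<lambda>_. A))"
    by (auto simp: prod_emb_def PiE_iff space_PiM)
  then have "emeasure samples {w \<in> space samples. \<forall>i\<in>I. w i \<in> A} = ennreal (measure N A) ^ card I"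
    using A I by (simp add: emeasure_samples_prod_emb emeasure_eq_measure)
  then show ?thesis
    by (simp add: measure_def ennreal_power)
qed

end

section \<open>Vanishing regret\<close>

locale ecp_setting = iid_sampling N X for N :: "'a::euclidean_space measure" and X +
  fixes f :: "'a \<Rightarrow> real" and k K e1 C t0 :: real and tau :: "nat \<Rightarrow> real"
  assumes f_borel: "f \<in> borel_measurable N"
    and lip: "lip_on X k f" and f_bound: "\<forall>x\<in>X. \<bar>f x\<bar> \<le> K"
    and e1: "0 < e1" and C: "0 \<le> C" and t0: "1 < t0" and tau: "\<And>n. t0 \<le> tau n"
    and small_balls: "\<And>e. 0 < e \<Longrightarrow> \<exists>r>0. \<forall>x\<in>X. measure N {y \<in> X. dist y x < r} \<le> e"
    and near_max_pos: "\<And>\<delta>. 0 < \<delta> \<Longrightarrow> 0 < measure N {x \<in> X. Sup (f ` X) - \<delta> < f x}"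
begin

lemma tau_ge_1: "1 \<le> tau n"
  using tau[of n] t0 by linarith

definition eps_threshold :: "real \<Rightarrow> nat" where
  "eps_threshold R = (SOME T. \<forall>n w j. T \<le> j \<longrightarrow> cnt (ecp_run X f n (tau n) e1 C w j) < n
     \<longrightarrow> R \<le> eps (ecp_run X f n (tau n) e1 C w j))"

lemma eps_ge_if_eps_threshold_le:
  assumes "eps_threshold R \<le> j" "cnt (ecp_run X f n (tau n) e1 C w j) < n"
  shows "R \<le> eps (ecp_run X f n (tau n) e1 C w j)"
proof -
  obtain T where "\<forall>n tau w j. t0 \<le> tau \<longrightarrow> T \<le> j \<longrightarrow> cnt (ecp_run X f n tau e1 C w j) < n
      \<longrightarrow> R \<le> eps (ecp_run X f n tau e1 C w j)"
    using eps_ecp_run_unbounded[OF C t0 e1] by blast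
  then have "\<forall>n w j. T \<le> j \<longrightarrow> cnt (ecp_run X f n (tau n) e1 C w j) < n
      \<longrightarrow> R \<le> eps (ecp_run X f n (tau n) e1 C w j)"
    using tau by simp
  then have "\<forall>n w j. eps_threshold R \<le> j \<longrightarrow> cnt (ecp_run X f n (tau n) e1 C w j) < n
      \<longrightarrow> R \<le> eps (ecp_run X f n (tau n) e1 C w j)"
    unfolding eps_threshold_def by (rule someI)
  then show ?thesis
    using assms by blast
qed

definition late_sample :: "nat \<Rightarrow> nat \<Rightarrow> nat" where
  "late_sample J m = Suc (max J (eps_threshold (real (Suc m))))"

lemma stalled_ecp_run_late_samples_close:
  assumes w: "w \<in> space samples" and stall: "\<forall>j. cnt (ecp_run X f n (tau n) e1 C w j) < n"
  obtains J where "\<forall>m. \<exists>i\<le>J. dist (w (late_sample J m)) (w i) < 2 * K / real (Suc m)"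
proof -
  have "range w \<subseteq> X"
    using space_samples_in[OF w] by auto
  then obtain J where close:
    "\<And>j. J \<le> j \<Longrightarrow> \<exists>i\<le>J. eps (ecp_run X f n (tau n) e1 C w j) * dist (w (Suc j)) (w i) < 2 * K"
    using stalled_ecp_run_candidates_close[OF stall f_bound _ tau_ge_1 e1] by blast
  have "\<exists>i\<le>J. dist (w (late_sample J m)) (w i) < 2 * K / real (Suc m)" for m
  proof -
    define j where "j = max J (eps_threshold (real (Suc m)))"
    obtain i where i: "i \<le> J" "eps (ecp_run X f n (tau n) e1 C w j) * dist (w (Suc j)) (w i) < 2 * K"
      using close[of j] by (auto simp: j_def)
    have "real (Suc m) \<le> eps (ecp_run X f n (tau n) e1 C w j)"
      using stall by (intro eps_ge_if_eps_threshold_le) (auto simp: j_def)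
    then have "real (Suc m) * dist (w (Suc j)) (w i) < 2 * K"
      using i(2) by (smt (verit) mult_right_mono zero_le_dist)
    then have "dist (w (Suc j)) (w i) < 2 * K / real (Suc m)"
      by (simp add: field_simps)
    moreover have "late_sample J m = Suc j"
      by (simp add: late_sample_def j_def)
    ultimately show ?thesis
      using i(1) by auto
  qed
  then show ?thesis
    using that by blast
qed

lemma AE_ecp_run_stops: "AE w in samples. \<forall>n. \<exists>j. n \<le> cnt (ecp_run X f n (tau n) e1 C w j)"
proof -
  define Z where
    "Z J = {w \<in> space samples. \<forall>m. \<exists>i\<le>J. dist (w (late_sample J m)) (w i) < 2 * K / real (Suc m)}" for J
  have "Z J \<in> null_sets samples" for J
    unfolding Z_def
  proof (rule null_sets_samples_close[OF small_balls])
    show "(\<lambda>m. 2 * K / real (Suc m)) \<longlonglongrightarrow> 0"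
      using LIMSEQ_Suc[OF lim_const_over_n] by simp
    show "J < late_sample J m" for m
      by (simp add: late_sample_def)
  qed
  then have "(\<Union>J. Z J) \<in> null_sets samples"
    by (rule null_sets_UN)
  moreover have "{w \<in> space samples. \<not> (\<forall>n. \<exists>j. n \<le> cnt (ecp_run X f n (tau n) e1 C w j))} \<subseteq> (\<Union>J. Z J)"
  proof
    fix w assume "w \<in> {w \<in> space samples. \<not> (\<forall>n. \<exists>j. n \<le> cnt (ecp_run X f n (tau n) e1 C w j))}"
    then obtain n where w: "w \<in> space samples" and stall: "\<forall>j. cnt (ecp_run X f n (tau n) e1 C w j) < n"
      by (auto simp: not_le)
    obtain J where "\<forall>m. \<exists>i\<le>J. dist (w (late_sample J m)) (w i) < 2 * K / real (Suc m)"
      using stalled_ecp_run_late_samples_close[OF w stall] .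
    then show "w \<in> (\<Union>J. Z J)"
      using w by (auto simp: Z_def)
  qed
  ultimately show ?thesis
    by (rule AE_I')
qed

lemma bdd_above_f: "bdd_above (f ` X)"
  using f_bound by (intro bdd_aboveI[of _ K]) (auto simp: abs_le_iff)

lemma large_ecp_regret_imp_samples_below:
  assumes w: "w \<in> space samples" and stop: "n \<le> cnt (ecp_run X f n (tau n) e1 C w J)"
    and regret: "\<delta> < \<bar>ecp_regret X f n (tau n) e1 C w\<bar>" and j: "eps_threshold k < j" "j < n"
  shows "f (w j) \<le> Sup (f ` X) - \<delta>"
proof -
  obtain j' where j': "j = Suc j'" "eps_threshold k \<le> j'"
    using j(1) by (cases j) auto
  have range: "range w \<subseteq> X"
    using space_samples_in[OF w] by auto
  have "cnt (ecp_run X f n (tau n) e1 C w j') < n"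
    using cnt_ecp_run_le[of X f n "tau n" e1 C w j'] j j' by linarith
  then have "k \<le> eps (ecp_run X f n (tau n) e1 C w j')"
    using j'(2) by (rule eps_ge_if_eps_threshold_le[rotated])
  then have "f (w j) \<le> Max (f ` set (ecp_points X f n (tau n) e1 C w))"
    using candidate_le_Max_ecp_points[OF lip range tau_ge_1 e1 stop] j j' by simp
  moreover have "Max (f ` set (ecp_points X f n (tau n) e1 C w)) \<le> Sup (f ` X)"
    by (rule Max_ecp_points_le_Sup[OF range bdd_above_f])
  ultimately show ?thesis
    using regret by (simp add: ecp_regret_def)
qed

lemma measure_large_ecp_regret_le:
  "measure samples {w \<in> space samples. \<delta> < \<bar>ecp_regret X f n (tau n) e1 C w\<bar>}
    \<le> measure N {x \<in> X. f x \<le> Sup (f ` X) - \<delta>} ^ (n - Suc (eps_threshold k))"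
proof -
  interpret S: prob_space samples
    by (rule prob_space_samples)
  define n0 where "n0 = Suc (eps_threshold k)"
  define far where "far = {x \<in> X. f x \<le> Sup (f ` X) - \<delta>}"
  have "{x \<in> space N. f x \<le> Sup (f ` X) - \<delta>} \<in> sets N"
    using f_borel by measurable
  then have far: "far \<in> sets N"
    by (simp add: far_def space_N)
  then have far_samples: "{w \<in> space samples. \<forall>j\<in>{n0..<n}. w j \<in> far} \<in> sets samples"
    by measurable
  have "AE w in samples. w \<in> {w \<in> space samples. \<delta> < \<bar>ecp_regret X f n (tau n) e1 C w\<bar>}
      \<longrightarrow> w \<in> {w \<in> space samples. \<forall>j\<in>{n0..<n}. w j \<in> far}"
    using AE_ecp_run_stops
  proof eventually_elim
    case (elim w)
    show ?case
    proof
      assume "w \<in> {w \<in> space samples. \<delta> < \<bar>ecp_regret X f n (tau n) e1 C w\<bar>}"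
      then have w: "w \<in> space samples" and regret: "\<delta> < \<bar>ecp_regret X f n (tau n) e1 C w\<bar>"
        by auto
      obtain J where stop: "n \<le> cnt (ecp_run X f n (tau n) e1 C w J)"
        using elim by blast
      have "f (w j) \<le> Sup (f ` X) - \<delta>" if "j \<in> {n0..<n}" for j
        using that by (intro large_ecp_regret_imp_samples_below[OF w stop regret]) (auto simp: n0_def)
      then show "w \<in> {w \<in> space samples. \<forall>j\<in>{n0..<n}. w j \<in> far}"
        using w space_samples_in[OF w] by (auto simp: far_def)
    qed
  qed
  then have "measure samples {w \<in> space samples. \<delta> < \<bar>ecp_regret X f n (tau n) e1 C w\<bar>}
      \<le> measure samples {w \<in> space samples. \<forall>j\<in>{n0..<n}. w j \<in> far}"
    by (rule S.finite_measure_mono_AE) (rule far_samples)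
  also have "\<dots> = measure N far ^ (n - n0)"
    using measure_samples_all_in[OF far finite_atLeastLessThan] by simp
  finally show ?thesis
    by (simp add: far_def n0_def)
qed

theorem large_ecp_regret_tendsto_0:
  assumes "0 < \<delta>"
  shows "(\<lambda>n. measure samples {w \<in> space samples. \<delta> < \<bar>ecp_regret X f n (tau n) e1 C w\<bar>}) \<longlonglongrightarrow> 0"
proof -
  define n0 where "n0 = Suc (eps_threshold k)"
  define q where "q = measure N {x \<in> X. f x \<le> Sup (f ` X) - \<delta>}"
  have "{x \<in> space N. Sup (f ` X) - \<delta> < f x} \<in> sets N"
    using f_borel by measurable
  moreover have "{x \<in> X. f x \<le> Sup (f ` X) - \<delta>} = space N - {x \<in> space N. Sup (f ` X) - \<delta> < f x}"
    by (auto simp: space_N)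
  ultimately have "q = 1 - measure N {x \<in> X. Sup (f ` X) - \<delta> < f x}"
    using prob_compl by (simp add: q_def space_N)
  then have q: "0 \<le> q" "q < 1"
    using near_max_pos[OF \<open>0 < \<delta>\<close>] by (auto simp: q_def)
  have lim: "(\<lambda>n. q ^ (n - n0)) \<longlonglongrightarrow> 0"
  proof (rule LIMSEQ_offset[where k = n0])
    show "(\<lambda>n. q ^ (n + n0 - n0)) \<longlonglongrightarrow> 0"
      using LIMSEQ_power_zero[of q] q by simp
  qed
  show ?thesis
    by (rule tendsto_sandwich[OF always_eventually always_eventually tendsto_const lim])
      (auto simp: q_def n0_def measure_large_ecp_regret_le)
qed

end

section \<open>The uniform distribution on a convex body\<close>

lemma measure_lborel_open_pos:
  fixes U :: "'a::euclidean_space set"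
  assumes "open U" "U \<noteq> {}" "bounded U"
  shows "0 < measure lborel U"
proof -
  obtain x r where "0 < r" "ball x r \<subseteq> U"
    using assms(1,2) open_contains_ball by blast
  moreover have "U \<in> fmeasurable lborel"
    using assms(1,3) emeasure_bounded_finite by (auto simp: fmeasurable_def)
  ultimately have "measure lborel (ball x r) \<le> measure lborel U"
    by (intro measure_mono_fmeasurable) auto
  then show ?thesis
    using content_ball_pos[OF \<open>0 < r\<close>, of x] by linarith
qed

abbreviation uniform_on :: "'a::euclidean_space set \<Rightarrow> 'a measure" where
  "uniform_on X \<equiv> restrict_space (uniform_measure lborel X) X"

lemma space_uniform_on: "space (uniform_on X) = X"
  by (simp add: space_restrict_space)

lemma sets_uniform_on: "sets (uniform_on X) = sets (restrict_space borel X)"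
  by (simp add: sets_restrict_space)

context
  fixes X :: "'a::euclidean_space set"
  assumes compact: "compact X" and interior: "interior X \<noteq> {}"
begin

lemma measure_lborel_X_pos: "0 < measure lborel X"
proof -
  have "0 < measure lborel (interior X)"
    using interior bounded_subset[OF compact_imp_bounded[OF compact] interior_subset]
    by (intro measure_lborel_open_pos) auto
  also have "\<dots> \<le> measure lborel X"
    using fmeasurable_compact[OF compact] interior_subset by (intro measure_mono_fmeasurable) auto
  finally show ?thesis .
qed

lemma prob_space_uniform_on: "prob_space (uniform_on X)"
proof -
  have "emeasure lborel X \<noteq> 0" "emeasure lborel X < \<infinity>"
    using measure_lborel_X_pos fmeasurable_compact[OF compact] by (auto simp: measure_def fmeasurable_def)
  then show ?thesis
    using borel_compact[OF compact] by (intro prob_space_restrict_space) (auto simp: emeasure_uniform_measure_1)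
qed

lemma measure_uniform_on:
  assumes "A \<in> sets borel" "A \<subseteq> X"
  shows "measure (uniform_on X) A = measure lborel A / measure lborel X"
proof -
  have "measure (uniform_on X) A = measure (uniform_measure lborel X) A"
    using assms borel_compact[OF compact] by (intro measure_restrict_space) auto
  also have "\<dots> = measure lborel (X \<inter> A) / measure lborel X"
    using assms fmeasurable_compact[OF compact] measure_lborel_X_pos
    by (intro measure_uniform_measure) (auto simp: fmeasurable_def measure_def)
  finally show ?thesis
    using assms(2) by (simp add: Int_absorb1)
qed

lemma uniform_on_small_balls:
  assumes e: "0 < e"
  shows "\<exists>r>0. \<forall>x\<in>X. measure (uniform_on X) {y \<in> X. dist y x < r} \<le> e"
proof -
  define U where "U = measure lborel (ball (0::'a) 1)"
  have U0: "U \<ge> 0" by (simp add: U_def)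
  have ball: "measure lborel (ball (x::'a) r) = U * r ^ DIM('a)" if "r \<ge> 0" for x r
    using content_ball[OF that, of x] content_ball[of 1 "0::'a"] by (simp add: U_def)
  define V where "V = measure lborel X"
  have V: "V > 0" using measure_lborel_X_pos by (simp add: V_def)
  define r where "r = min 1 (e * V / (U + 1))"
  have r0: "r > 0" using e V U0 by (simp add: r_def)
  have rD: "r ^ DIM('a) \<le> r"
    using power_decreasing[of 1 "DIM('a)" r] r0 DIM_positive[where 'a='a] by (simp add: r_def)
  have Ur: "U * r \<le> e * V"
  proof -
    have "U * r \<le> (U + 1) * r" using r0 by (simp add: algebra_simps)
    also have "\<dots> \<le> (U + 1) * (e * V / (U + 1))" using U0 by (intro mult_left_mono) (auto simp: r_def)
    also have "\<dots> = e * V" using U0 by simp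
    finally show ?thesis .
  qed
  show ?thesis
  proof (intro exI[of _ r] conjI ballI r0)
    fix x assume x: "x \<in> X"
    have B: "{y \<in> X. dist y x < r} = X \<inter> ball x r"
      by (auto simp: dist_commute)
    have "measure (uniform_on X) {y \<in> X. dist y x < r} = measure lborel (X \<inter> ball x r) / V"
      unfolding B using borel_compact[OF compact] by (subst measure_uniform_on) (auto simp: V_def)
    also have "\<dots> \<le> measure lborel (ball x r) / V"
      using V borel_compact[OF compact] emeasure_lborel_ball_finite
      by (intro divide_right_mono measure_mono_fmeasurable) (auto simp: fmeasurable_def)
    also have "\<dots> = U * r ^ DIM('a) / V" using ball r0 by simp
    also have "\<dots> \<le> U * r / V" using V U0 rD by (intro divide_right_mono mult_left_mono) auto
    also have "\<dots> \<le> e" using Ur V by (simp add: field_simps)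
    finally show "measure (uniform_on X) {y \<in> X. dist y x < r} \<le> e" .
  qed
qed

lemma uniform_on_open_pos:
  assumes "convex X" "open U" "U \<inter> X \<noteq> {}"
  shows "0 < measure (uniform_on X) (U \<inter> X)"
proof -
  have "X \<subseteq> closure (interior X)"
    using convex_closure_interior[OF assms(1) interior] closure_subset by blast
  then have "U \<inter> interior X \<noteq> {}"
    using assms(3) open_Int_closure_eq_empty[OF assms(2)] by blast
  then have "0 < measure lborel (U \<inter> interior X)"
    using assms(2) bounded_subset[OF compact_imp_bounded[OF compact] interior_subset]
    by (intro measure_lborel_open_pos) (auto intro: bounded_Int)
  then have "0 < measure lborel (U \<inter> interior X) / measure lborel X"
    using measure_lborel_X_pos by simp
  also have "\<dots> = measure (uniform_on X) (U \<inter> interior X)"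
    using assms(2) interior_subset by (intro measure_uniform_on[symmetric]) auto
  also have "\<dots> \<le> measure (uniform_on X) (U \<inter> X)"
  proof (rule finite_measure.finite_measure_mono[OF prob_space.finite_measure[OF prob_space_uniform_on]])
    show "U \<inter> interior X \<subseteq> U \<inter> X"
      using interior_subset by blast
    show "U \<inter> X \<in> sets (uniform_on X)"
      using assms(2) borel_compact[OF compact] by (auto simp: sets_uniform_on sets_restrict_space_iff)
  qed
  finally show ?thesis .
qed

lemma uniform_on_near_max_pos:
  fixes f :: "'a \<Rightarrow> real"
  assumes "convex X" "continuous_on X f" "0 < \<delta>"
  shows "0 < measure (uniform_on X) {x \<in> X. Sup (f ` X) - \<delta> < f x}"
proof -
  obtain x0 where x0: "x0 \<in> X" "\<forall>y\<in>X. f y \<le> f x0"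
    using continuous_attains_sup[OF compact _ assms(2)] interior interior_subset by blast
  then have "Sup (f ` X) = f x0"
    by (intro cSup_eq_maximum) auto
  obtain U where "open U" "U \<inter> X = f -` {Sup (f ` X) - \<delta> <..} \<inter> X"
    using assms(2) continuous_on_open_invariant open_greaterThan by metis
  moreover have "x0 \<in> U \<inter> X"
    using calculation x0 \<open>Sup (f ` X) = f x0\<close> \<open>0 < \<delta>\<close> by auto
  ultimately show ?thesis
    using uniform_on_open_pos[OF assms(1), of U] by (auto simp: Int_commute Collect_conj_eq vimage_def)
qed

end

theorem theorem2:
  fixes X :: "'a::euclidean_space set" and f :: "'a \<Rightarrow> real"
    and k e1 C :: real and tau :: "nat \<Rightarrow> nat \<Rightarrow> real"
  assumes "convex X" and "compact X" and "interior X \<noteq> {}"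
    and "k \<ge> 0" and "lip_on X k f"
    and "e1 > 0" and "C > 1"
    and "\<forall>n d. tau n d > 1"
    and "\<forall>n n' d d'. n \<le> n' \<longrightarrow> d \<le> d' \<longrightarrow> tau n d \<le> tau n' d'"
  defines "M \<equiv> PiM (UNIV :: nat set) (\<lambda>_. restrict_space (uniform_measure lborel X) X)"
  shows "(\<forall>n. ecp_regret X f n (tau n DIM('a)) e1 C \<in> borel_measurable M) \<and>
         (\<forall>\<delta>>0. (\<lambda>n. measure M {w \<in> space M. \<bar>ecp_regret X f n (tau n DIM('a)) e1 C w\<bar> > \<delta>})
                  \<longlonglongrightarrow> 0)"
proof -
  note convex = assms(1) and compact = assms(2) and interior = assms(3)
  have "k-lipschitz_on X f"
    using assms(4,5) unfolding lip_on_def lipschitz_on_def by (simp add: dist_norm dist_real_def)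
  then have cont: "continuous_on X f"
    by (rule lipschitz_on_continuous_on)
  obtain K where K: "\<forall>x\<in>X. \<bar>f x\<bar> \<le> K"
    using compact_imp_bounded[OF compact_continuous_image[OF cont compact]] by (auto simp: bounded_iff)
  interpret sampling "uniform_on X" X
    using space_uniform_on sets_uniform_on by unfold_locales
  have f_borel: "f \<in> borel_measurable (uniform_on X)"
    using borel_measurable_continuous_on_restrict[OF cont] sets_uniform_on
    by (subst measurable_cong_sets) auto
  (* monotonicity of tau in n makes tau 0 DIM('a) > 1 a lower bound for all tau n DIM('a) *)
  interpret ecp_setting "uniform_on X" X f k K e1 C "tau 0 DIM('a)" "\<lambda>n. tau n DIM('a)"
  proof (intro ecp_setting.intro iid_sampling.intro ecp_setting_axioms.intro)
    show "prob_space (uniform_on X)"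
      using compact interior by (rule prob_space_uniform_on)
  qed (use assms f_borel K uniform_on_small_balls[OF compact interior]
        uniform_on_near_max_pos[OF compact interior convex cont] in \<open>auto intro: sampling_axioms\<close>)
  show ?thesis
    unfolding M_def using ecp_regret_borel_measurable[OF f_borel] large_ecp_regret_tendsto_0 by auto
qed

end
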